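(* Let $\Lambda=\{\lambda_1,\dots,\lambda_N\}$ be a finite set of non-zero complex numbers such that (1) $\Lambda=\bar\Lambda$ (closed under complex conjugation), (2) $1\in\Lambda$, and (3) $|\lambda|\le1$ for all $\lambda\in\Lambda$. Then there exists a completely positive trace-preserving linear map $T:\mathcal{M}_d(\mathbb{C})\to\mathcal{M}_d(\mathbb{C})$ with $d\le 2\max\{N-1,1\}$ such that $\{\mathrm{spec}(T)\}\setminus\{0\}=\Lambda$. Conversely, if $\Lambda$ is the spectral set $\{\mathrm{spec}(T)\}$ of a positive trace-preserving linear map $T$ on some $\mathcal{M}_d(\mathbb{C})$, then $\Lambda$ satisfies (1)–(3).
   Context: $\{\mathrm{spec}(T)\}$ denotes the spectral set of $T$: the set (without multiplicities) of $\lambda\in\mathbb{C}$ for which $T-\lambda\,\mathrm{id}$ is not invertible on $\mathcal{M}_d(\mathbb{C})$. Positive: maps positive semidefinite matrices to positive semidefinite matrices; completely positive: $T\otimes\mathrm{id}_d$ is positive; trace-preserving: $\mathrm{tr}[T(X)]=\mathrm{tr}[X]$. *)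

theory Defs
  imports "Jordan_Normal_Form.Matrix"
begin

definition psd_mat :: "nat \<Rightarrow> complex mat \<Rightarrow> bool" where
  "psd_mat n A \<longleftrightarrow> A \<in> carrier_mat n n \<and>
     (\<forall>v :: nat \<Rightarrow> complex.
        Im (\<Sum>i<n. \<Sum>j<n. cnj (v i) * A $$ (i, j) * v j) = 0 \<and>
        Re (\<Sum>i<n. \<Sum>j<n. cnj (v i) * A $$ (i, j) * v j) \<ge> 0)"

definition lin_map_on :: "nat \<Rightarrow> (complex mat \<Rightarrow> complex mat) \<Rightarrow> bool" where
  "lin_map_on d T \<longleftrightarrow>
     (\<forall>X \<in> carrier_mat d d. T X \<in> carrier_mat d d) \<and>
     (\<forall>X \<in> carrier_mat d d. \<forall>Y \<in> carrier_mat d d. T (X + Y) = T X + T Y) \<and>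
     (\<forall>c. \<forall>X \<in> carrier_mat d d. T (c \<cdot>\<^sub>m X) = c \<cdot>\<^sub>m T X)"

definition positive_map :: "nat \<Rightarrow> (complex mat \<Rightarrow> complex mat) \<Rightarrow> bool" where
  "positive_map d T \<longleftrightarrow> (\<forall>X. psd_mat d X \<longrightarrow> psd_mat d (T X))"

definition trace_preserving :: "nat \<Rightarrow> (complex mat \<Rightarrow> complex mat) \<Rightarrow> bool" where
  "trace_preserving d T \<longleftrightarrow> (\<forall>X \<in> carrier_mat d d. (\<Sum>i<d. T X $$ (i, i)) = (\<Sum>i<d. X $$ (i, i)))"

text \<open>T \<otimes> id_d on M_d \<otimes> M_d = M_(d*d); the tensor index (i,a) (i for the first
  factor, a for the second) is encoded as i*d + a.\<close>
definition tensor_id :: "nat \<Rightarrow> (complex mat \<Rightarrow> complex mat) \<Rightarrow> complex mat \<Rightarrow> complex mat" where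
  "tensor_id d T Y = mat (d*d) (d*d) (\<lambda>(p, q).
      T (mat d d (\<lambda>(i, j). Y $$ (i*d + p mod d, j*d + q mod d))) $$ (p div d, q div d))"

definition completely_positive :: "nat \<Rightarrow> (complex mat \<Rightarrow> complex mat) \<Rightarrow> bool" where
  "completely_positive d T \<longleftrightarrow> (\<forall>Y. psd_mat (d*d) Y \<longrightarrow> psd_mat (d*d) (tensor_id d T Y))"

definition spec_set :: "nat \<Rightarrow> (complex mat \<Rightarrow> complex mat) \<Rightarrow> complex set" where
  "spec_set d T = {z. \<not> bij_betw (\<lambda>X. T X - z \<cdot>\<^sub>m X) (carrier_mat d d) (carrier_mat d d)}"

end

theory Submission
  imports Defs "Jordan_Normal_Form.Determinant"
begin

(* Every d x d matrix is a combination P1 - P2 + i P3 - i P4 of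
   positive semidefinite (PSD) matrices: split it into Hermitian parts and shift each by
   a large multiple of the identity.  Hence a positive linear map commutes with the
   adjoint, and its eigenvalues come in conjugate pairs.  Every entry of a PSD matrix is
   bounded by its trace, so under a positive trace-preserving map all orbits T^k X stay
   bounded and every eigenvalue lies in the closed unit disc.  The image of T - id
   consists of trace-zero matrices, so 1 is in the spectrum.  Spectral values are
   identified with eigenvalues of eigenmatrices, because an injective linear map on the
   finite-dimensional space M_d is surjective (proved via determinants).

   A Schur multiplier X |-> (M_ij X_ij) is trace preserving when
   diag M = 1, completely positive when M is a Gram matrix, and its spectral set is the
   set of entries of M.  Choosing one representative mu of each conjugate pair in
   Lambda - {1} (at most |Lambda| - 1 of them), the block-diagonal M with 2x2 blocks
   [1 mu; cnj mu 1] is a Gram matrix because |mu| <= 1, and its nonzero entries are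
   exactly Lambda. *)

section \<open>Quadratic forms and positive semidefinite matrices\<close>

definition qf :: "nat \<Rightarrow> complex mat \<Rightarrow> (nat \<Rightarrow> complex) \<Rightarrow> complex" where
  "qf n A v = (\<Sum>i<n. \<Sum>j<n. cnj (v i) * A $$ (i, j) * v j)"

lemma psd_mat_qf:
  "psd_mat n A \<longleftrightarrow> A \<in> carrier_mat n n \<and> (\<forall>v. Im (qf n A v) = 0 \<and> Re (qf n A v) \<ge> 0)"
  unfolding psd_mat_def qf_def by simp

lemma psd_carrier: "psd_mat n A \<Longrightarrow> A \<in> carrier_mat n n"
  unfolding psd_mat_def by simp

lemma qf_support:
  assumes S: "S \<subseteq> {..<n}" and v: "\<And>k. k \<notin> S \<Longrightarrow> v k = 0"
  shows "qf n A v = (\<Sum>k\<in>S. \<Sum>l\<in>S. cnj (v k) * A $$ (k, l) * v l)"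
proof -
  have "qf n A v = (\<Sum>k<n. \<Sum>l\<in>S. cnj (v k) * A $$ (k, l) * v l)"
    unfolding qf_def by (rule sum.cong[OF refl], rule sum.mono_neutral_right) (use S v in auto)
  also have "\<dots> = (\<Sum>k\<in>S. \<Sum>l\<in>S. cnj (v k) * A $$ (k, l) * v l)"
    by (rule sum.mono_neutral_right) (use S v in auto)
  finally show ?thesis .
qed

lemma qf_one:
  assumes "i < n"
  shows "qf n A (\<lambda>k. if k = i then 1 else 0) = A $$ (i,i)"
  by (subst qf_support[where S="{i}"]) (use assms in auto)

lemma qf_two:
  assumes "i < n" and "j < n" and "i \<noteq> j"
  shows "qf n A (\<lambda>k. if k = i then a else if k = j then b else 0) =
     cnj a * A $$ (i,i) * a + cnj a * A $$ (i,j) * b + cnj b * A $$ (j,i) * a + cnj b * A $$ (j,j) * b"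
  by (subst qf_support[where S="{i,j}"]) (use assms in auto)

lemma psd_diag:
  assumes P: "psd_mat n A" and i: "i < n"
  shows "Im (A $$ (i,i)) = 0" "Re (A $$ (i,i)) \<ge> 0"
  using P qf_one[OF i, of A] unfolding psd_mat_qf by metis+

(* A PSD matrix is Hermitian: test the form on e_i + e_j and e_i + i e_j. *)
lemma psd_herm:
  assumes P: "psd_mat n A" and i: "i < n" and j: "j < n"
  shows "A $$ (j,i) = cnj (A $$ (i,j))"
proof (cases "i = j")
  case True thus ?thesis using psd_diag[OF P i] by (simp add: complex_eq_iff)
next
  case False
  have q: "\<And>v. Im (qf n A v) = 0" using P unfolding psd_mat_qf by auto
  have "Im (A $$ (i,j)) + Im (A $$ (j,i)) = 0"
    using q[of "\<lambda>k. if k = i then 1 else if k = j then 1 else 0"] psd_diag[OF P i] psd_diag[OF P j]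
    unfolding qf_two[OF i j False] by simp
  moreover have "Re (A $$ (i,j)) - Re (A $$ (j,i)) = 0"
    using q[of "\<lambda>k. if k = i then 1 else if k = j then \<i> else 0"] psd_diag[OF P i] psd_diag[OF P j]
    unfolding qf_two[OF i j False] by simp
  ultimately show ?thesis by (simp add: complex_eq_iff)
qed

(* |A_ij| <= (A_ii + A_jj) / 2 for PSD A: test the form on e_i + b e_j with the unimodular
   b = - cnj A_ij / |A_ij|. *)
lemma psd_entry_bound:
  assumes P: "psd_mat n A" and i: "i < n" and j: "j < n"
  shows "cmod (A $$ (i,j)) \<le> (Re (A $$ (i,i)) + Re (A $$ (j,j))) / 2"
proof (cases "i = j \<or> A $$ (i,j) = 0")
  case True thus ?thesis using psd_diag[OF P i] psd_diag[OF P j] by (auto simp: cmod_eq_Re)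
next
  case False
  hence ij: "i \<noteq> j" and nz: "A $$ (i,j) \<noteq> 0" by auto
  define u where "u = A $$ (i,j)"
  define r where "r = cmod u"
  have r0: "r > 0" using nz unfolding r_def u_def by simp
  define b where "b = - cnj u / complex_of_real r"
  have uu: "u * cnj u = complex_of_real (r^2)"
    unfolding r_def by (simp add: complex_norm_square del: of_real_power)
  have hb: "A $$ (j,i) = cnj u" using psd_herm[OF P i j] unfolding u_def .
  have t1: "u * b = - complex_of_real r"
    unfolding b_def using uu r0 by (simp add: field_simps power2_eq_square)
  have t2: "cnj b * cnj u = - complex_of_real r"
    unfolding b_def using uu r0 by (simp add: field_simps power2_eq_square mult.commute)
  have t3: "cnj b * b = 1"
    unfolding b_def using uu r0 by (simp add: field_simps power2_eq_square mult.commute)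
  have "0 \<le> Re (qf n A (\<lambda>k. if k = i then 1 else if k = j then b else 0))"
    using P unfolding psd_mat_qf by auto
  also have "qf n A (\<lambda>k. if k = i then 1 else if k = j then b else 0)
      = A $$ (i,i) + u * b + cnj b * cnj u + (cnj b * b) * A $$ (j,j)"
    unfolding qf_two[OF i j ij] hb u_def by (simp add: algebra_simps)
  also have "\<dots> = A $$ (i,i) - 2 * complex_of_real r + A $$ (j,j)"
    unfolding t1 t2 t3 by simp
  finally show ?thesis unfolding r_def u_def by simp
qed

lemma psd_entry_trace:
  assumes P: "psd_mat n A" and i: "i < n" and j: "j < n"
  shows "cmod (A $$ (i,j)) \<le> Re (\<Sum>k<n. A $$ (k,k))"
proof -
  have nn: "\<And>k. k \<in> {..<n} \<Longrightarrow> 0 \<le> Re (A $$ (k,k))" using psd_diag[OF P] by auto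
  have "Re (A $$ (i,i)) \<le> (\<Sum>k<n. Re (A $$ (k,k)))"
    by (rule member_le_sum[of i]) (use i nn in auto)
  moreover have "Re (A $$ (j,j)) \<le> (\<Sum>k<n. Re (A $$ (k,k)))"
    by (rule member_le_sum[of j]) (use j nn in auto)
  ultimately show ?thesis using psd_entry_bound[OF P i j] by (simp add: Re_sum)
qed

section \<open>Every matrix is a combination of four PSD matrices\<close>

definition herm :: "nat \<Rightarrow> complex mat \<Rightarrow> bool" where
  "herm n H \<longleftrightarrow> H \<in> carrier_mat n n \<and> (\<forall>i<n. \<forall>j<n. H $$ (j,i) = cnj (H $$ (i,j)))"

(* The form of a Hermitian matrix is real-valued: it equals its own conjugate. *)
lemma qf_herm_real:
  assumes H: "herm n H"
  shows "Im (qf n H v) = 0"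
proof -
  have h: "cnj (H $$ (i,j)) = H $$ (j,i)" if "i < n" "j < n" for i j
    using H that unfolding herm_def by (metis complex_cnj_cnj)
  have "cnj (qf n H v) = (\<Sum>i<n. \<Sum>j<n. v i * cnj (H $$ (i,j)) * cnj (v j))"
    unfolding qf_def cnj_sum by simp
  also have "\<dots> = (\<Sum>i<n. \<Sum>j<n. v i * H $$ (j,i) * cnj (v j))"
    by (rule sum.cong[OF refl], rule sum.cong[OF refl]) (simp add: h)
  also have "\<dots> = (\<Sum>j<n. \<Sum>i<n. v i * H $$ (j,i) * cnj (v j))" by (rule sum.swap)
  also have "\<dots> = qf n H v"
    unfolding qf_def by (auto intro!: sum.cong simp: mult.commute mult.left_commute)
  finally show ?thesis by (metis Reals_cnj_iff complex_is_Real_iff)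
qed

lemma qf_bound:
  fixes v :: "nat \<Rightarrow> complex"
  shows "cmod (qf n H v) \<le> (\<Sum>i<n. \<Sum>j<n. cmod (H $$ (i,j))) * (\<Sum>k<n. (cmod (v k))^2)"
proof -
  let ?S = "\<Sum>k<n. (cmod (v k))^2"
  have sq: "cmod (v i) * cmod (v j) \<le> ?S" if "i < n" "j < n" for i j
  proof -
    have "(cmod (v i))^2 \<le> ?S" "(cmod (v j))^2 \<le> ?S"
      by (rule member_le_sum; use that in auto)+
    moreover have "cmod (v i) * cmod (v j) \<le> ((cmod (v i))^2 + (cmod (v j))^2) / 2"
      using sum_squares_bound[of "cmod (v i)" "cmod (v j)"] by (simp add: power2_eq_square)
    ultimately show ?thesis by (simp add: field_simps)
  qed
  have "cmod (qf n H v) \<le> (\<Sum>i<n. \<Sum>j<n. cmod (cnj (v i) * H $$ (i, j) * v j))"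
    unfolding qf_def by (rule order_trans[OF norm_sum sum_mono[OF norm_sum]])
  also have "\<dots> \<le> (\<Sum>i<n. \<Sum>j<n. cmod (H $$ (i,j)) * ?S)"
  proof (intro sum_mono)
    fix i j assume "i \<in> {..<n}" "j \<in> {..<n}"
    hence "cmod (H $$ (i,j)) * (cmod (v i) * cmod (v j)) \<le> cmod (H $$ (i,j)) * ?S"
      by (intro mult_left_mono sq) auto
    thus "cmod (cnj (v i) * H $$ (i, j) * v j) \<le> cmod (H $$ (i,j)) * ?S"
      by (simp add: norm_mult mult_ac)
  qed
  also have "\<dots> = (\<Sum>i<n. \<Sum>j<n. cmod (H $$ (i,j))) * ?S" by (simp add: sum_distrib_right)
  finally show ?thesis .
qed

definition diag_shift :: "nat \<Rightarrow> complex mat \<Rightarrow> real \<Rightarrow> complex mat" where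
  "diag_shift n H c = mat n n (\<lambda>(i,j). H $$ (i,j) + (if i = j then complex_of_real c else 0))"

lemma qf_diag_shift:
  "qf n (diag_shift n H c) v = qf n H v + complex_of_real (c * (\<Sum>k<n. (cmod (v k))^2))"
proof -
  have row: "(\<Sum>j<n. cnj (v i) * (H $$ (i,j) + (if i = j then complex_of_real c else 0)) * v j)
      = (\<Sum>j<n. cnj (v i) * H $$ (i, j) * v j) + complex_of_real c * (cnj (v i) * v i)"
    if i: "i < n" for i
  proof -
    have "(\<Sum>j<n. cnj (v i) * (H $$ (i,j) + (if i = j then complex_of_real c else 0)) * v j)
       = (\<Sum>j<n. cnj (v i) * H $$ (i, j) * v j) +
         (\<Sum>j<n. if i = j then cnj (v i) * complex_of_real c * v j else 0)"
      by (subst sum.distrib[symmetric]) (auto intro!: sum.cong simp: algebra_simps)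
    thus ?thesis using i by (simp add: sum.delta algebra_simps)
  qed
  have "qf n (diag_shift n H c) v
      = (\<Sum>i<n. (\<Sum>j<n. cnj (v i) * H $$ (i, j) * v j) + complex_of_real c * (cnj (v i) * v i))"
    unfolding qf_def diag_shift_def by (rule sum.cong[OF refl]) (simp add: row[symmetric])
  also have "\<dots> = qf n H v + (\<Sum>i<n. complex_of_real c * (cnj (v i) * v i))"
    unfolding qf_def sum.distrib by simp
  also have "(\<Sum>i<n. complex_of_real c * (cnj (v i) * v i))
      = complex_of_real (c * (\<Sum>k<n. (cmod (v k))^2))"
    by (simp add: sum_distrib_left complex_norm_square mult.commute del: of_real_power)
  finally show ?thesis .
qed

lemma herm_diag_shift_psd:
  assumes H: "herm n H" and c: "(\<Sum>i<n. \<Sum>j<n. cmod (H $$ (i,j))) \<le> c"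
  shows "psd_mat n (diag_shift n H c)"
  unfolding psd_mat_qf
proof (intro conjI allI)
  fix v
  show "Im (qf n (diag_shift n H c) v) = 0"
    unfolding qf_diag_shift using qf_herm_real[OF H] by simp
  have "- Re (qf n H v) \<le> cmod (qf n H v)" using abs_Re_le_cmod[of "qf n H v"] by linarith
  also have "\<dots> \<le> c * (\<Sum>k<n. (cmod (v k))^2)"
    by (rule order_trans[OF qf_bound mult_right_mono[OF c]]) (simp add: sum_nonneg)
  finally show "0 \<le> Re (qf n (diag_shift n H c) v)" unfolding qf_diag_shift by simp
qed (simp add: diag_shift_def)

(* H = (H + c id) - c id with c the sum of the absolute values of the entries of H. *)
lemma herm_decomp:
  assumes H: "herm n H"
  shows "\<exists>P Q. psd_mat n P \<and> psd_mat n Q \<and> H = P - Q"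
proof -
  define c where "c = (\<Sum>i<n. \<Sum>j<n. cmod (H $$ (i,j)))"
  have HC: "H \<in> carrier_mat n n" using H unfolding herm_def by simp
  have "psd_mat n (diag_shift n H c)" by (rule herm_diag_shift_psd[OF H]) (simp add: c_def)
  moreover have "psd_mat n (diag_shift n (0\<^sub>m n n) c)"
    by (rule herm_diag_shift_psd) (auto simp: herm_def c_def sum_nonneg)
  moreover have "H = diag_shift n H c - diag_shift n (0\<^sub>m n n) c"
    using HC unfolding diag_shift_def by (auto intro!: eq_matI)
  ultimately show ?thesis by blast
qed

definition comb4 :: "complex \<Rightarrow> complex \<Rightarrow> complex \<Rightarrow> complex \<Rightarrow>
    complex mat \<Rightarrow> complex mat \<Rightarrow> complex mat \<Rightarrow> complex mat \<Rightarrow> complex mat" where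
  "comb4 a b c e P1 P2 P3 P4 = a \<cdot>\<^sub>m P1 + b \<cdot>\<^sub>m P2 + c \<cdot>\<^sub>m P3 + e \<cdot>\<^sub>m P4"

lemma comb4_carrier:
  "P1 \<in> carrier_mat n n \<Longrightarrow> P2 \<in> carrier_mat n n \<Longrightarrow> P3 \<in> carrier_mat n n \<Longrightarrow> P4 \<in> carrier_mat n n
   \<Longrightarrow> comb4 a b c e P1 P2 P3 P4 \<in> carrier_mat n n"
  unfolding comb4_def by auto

lemma comb4_index:
  "P1 \<in> carrier_mat n n \<Longrightarrow> P2 \<in> carrier_mat n n \<Longrightarrow> P3 \<in> carrier_mat n n \<Longrightarrow> P4 \<in> carrier_mat n n
   \<Longrightarrow> i < n \<Longrightarrow> j < n \<Longrightarrow>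
   comb4 a b c e P1 P2 P3 P4 $$ (i,j) = a * P1 $$ (i,j) + b * P2 $$ (i,j) + c * P3 $$ (i,j) + e * P4 $$ (i,j)"
  unfolding comb4_def by auto

(* X = H1 + i H2 with H1, H2 Hermitian, and each Hermitian part is a difference of PSDs. *)
lemma psd_decomp:
  assumes X: "X \<in> carrier_mat n n"
  shows "\<exists>P1 P2 P3 P4. psd_mat n P1 \<and> psd_mat n P2 \<and> psd_mat n P3 \<and> psd_mat n P4 \<and>
           X = comb4 1 (-1) \<i> (-\<i>) P1 P2 P3 P4"
proof -
  define H1 where "H1 = mat n n (\<lambda>(i,j). (X $$ (i,j) + cnj (X $$ (j,i))) / 2)"
  define H2 where "H2 = mat n n (\<lambda>(i,j). (X $$ (i,j) - cnj (X $$ (j,i))) / (2 * \<i>))"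
  have "herm n H1" unfolding herm_def H1_def by (auto simp: add.commute)
  then obtain P1 P2 where P12: "psd_mat n P1" "psd_mat n P2" "H1 = P1 - P2"
    using herm_decomp by blast
  have "herm n H2" unfolding herm_def H2_def by (auto simp: algebra_simps diff_divide_distrib)
  then obtain P3 P4 where P34: "psd_mat n P3" "psd_mat n P4" "H2 = P3 - P4"
    using herm_decomp by blast
  have C: "P1 \<in> carrier_mat n n" "P2 \<in> carrier_mat n n" "P3 \<in> carrier_mat n n" "P4 \<in> carrier_mat n n"
    using P12 P34 psd_carrier by auto
  have "X = comb4 1 (-1) \<i> (-\<i>) P1 P2 P3 P4"
  proof (rule eq_matI)
    fix i j assume "i < dim_row (comb4 1 (-1) \<i> (-\<i>) P1 P2 P3 P4)"
      "j < dim_col (comb4 1 (-1) \<i> (-\<i>) P1 P2 P3 P4)"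
    hence i: "i < n" and j: "j < n"
      using comb4_carrier[OF C, of 1 "-1" \<i> "-\<i>"] by (simp_all add: carrier_matD)
    have "X $$ (i,j) = H1 $$ (i,j) + \<i> * H2 $$ (i,j)"
      unfolding H1_def H2_def using i j by (simp add: field_simps)
    also have "\<dots> = (P1 - P2) $$ (i,j) + \<i> * (P3 - P4) $$ (i,j)" using P12(3) P34(3) by simp
    finally show "X $$ (i,j) = comb4 1 (-1) \<i> (-\<i>) P1 P2 P3 P4 $$ (i,j)"
      unfolding comb4_index[OF C i j] using C i j by (simp add: algebra_simps)
  qed (use X carrier_matD[OF comb4_carrier[OF C, of 1 "-1" \<i> "-\<i>"]] in auto)
  thus ?thesis using P12 P34 by blast
qed

lemma lin_closed: "lin_map_on d S \<Longrightarrow> X \<in> carrier_mat d d \<Longrightarrow> S X \<in> carrier_mat d d"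
  unfolding lin_map_on_def by auto

lemma lin_add:
  "lin_map_on d S \<Longrightarrow> X \<in> carrier_mat d d \<Longrightarrow> Y \<in> carrier_mat d d \<Longrightarrow> S (X + Y) = S X + S Y"
  unfolding lin_map_on_def by auto

lemma lin_smult: "lin_map_on d S \<Longrightarrow> X \<in> carrier_mat d d \<Longrightarrow> S (c \<cdot>\<^sub>m X) = c \<cdot>\<^sub>m S X"
  unfolding lin_map_on_def by auto

lemma lin_zero:
  assumes "lin_map_on d S"
  shows "S (0\<^sub>m d d) = 0\<^sub>m d d"
proof -
  have "S (0\<^sub>m d d) = S (0 \<cdot>\<^sub>m 0\<^sub>m d d)" by simp
  also have "\<dots> = 0 \<cdot>\<^sub>m S (0\<^sub>m d d)" using lin_smult[OF assms zero_carrier_mat] by simp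
  also have "\<dots> = 0\<^sub>m d d" using lin_closed[OF assms, of "0\<^sub>m d d"] by (auto intro!: eq_matI)
  finally show ?thesis .
qed

lemma lin_comb4:
  assumes T: "lin_map_on d T"
    and C: "P1 \<in> carrier_mat d d" "P2 \<in> carrier_mat d d" "P3 \<in> carrier_mat d d" "P4 \<in> carrier_mat d d"
  shows "T (comb4 a b c e P1 P2 P3 P4) = comb4 a b c e (T P1) (T P2) (T P3) (T P4)"
  unfolding comb4_def using C by (simp add: lin_add[OF T] lin_smult[OF T])

lemma lin_minus_scalar:
  assumes T: "lin_map_on d T"
  shows "lin_map_on d (\<lambda>X. T X - z \<cdot>\<^sub>m X)"
  unfolding lin_map_on_def
proof (intro conjI ballI allI)
  fix X :: "complex mat" assume X: "X \<in> carrier_mat d d"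
  show "T X - z \<cdot>\<^sub>m X \<in> carrier_mat d d" using X by (simp add: minus_carrier_mat)
  fix c
  show "T (c \<cdot>\<^sub>m X) - z \<cdot>\<^sub>m (c \<cdot>\<^sub>m X) = c \<cdot>\<^sub>m (T X - z \<cdot>\<^sub>m X)"
    unfolding lin_smult[OF T X] using lin_closed[OF T X] X
    by (auto intro!: eq_matI simp: algebra_simps)
next
  fix X Y :: "complex mat" assume X: "X \<in> carrier_mat d d" and Y: "Y \<in> carrier_mat d d"
  show "T (X + Y) - z \<cdot>\<^sub>m (X + Y) = T X - z \<cdot>\<^sub>m X + (T Y - z \<cdot>\<^sub>m Y)"
    unfolding lin_add[OF T X Y] using lin_closed[OF T X] lin_closed[OF T Y] X Y
    by (auto intro!: eq_matI simp: algebra_simps)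
qed

lemma iterate_props:
  assumes T: "lin_map_on d T" and P: "positive_map d T" and TP: "trace_preserving d T"
  shows "lin_map_on d (T ^^ k) \<and> positive_map d (T ^^ k) \<and> trace_preserving d (T ^^ k)"
proof (induction k)
  case 0
  show ?case unfolding lin_map_on_def positive_map_def trace_preserving_def by simp
next
  case (Suc k)
  hence L: "lin_map_on d (T ^^ k)" and Pk: "positive_map d (T ^^ k)"
    and Tk: "trace_preserving d (T ^^ k)" by auto
  have "lin_map_on d (T ^^ Suc k)"
    unfolding lin_map_on_def funpow.simps comp_def
    using lin_closed[OF T lin_closed[OF L]] lin_add[OF L] lin_add[OF T lin_closed[OF L] lin_closed[OF L]]
      lin_smult[OF L] lin_smult[OF T lin_closed[OF L]]
    by simp
  moreover have "positive_map d (T ^^ Suc k)" using P Pk unfolding positive_map_def by simp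
  moreover have "trace_preserving d (T ^^ Suc k)"
    using TP Tk lin_closed[OF L] unfolding trace_preserving_def by simp
  ultimately show ?case by blast
qed

lemma iterate_eigen:
  assumes T: "lin_map_on d T" and X: "X \<in> carrier_mat d d" and e: "T X = z \<cdot>\<^sub>m X"
  shows "(T ^^ k) X = z ^ k \<cdot>\<^sub>m X"
proof (induction k)
  case 0 show ?case using X by (auto intro!: eq_matI)
next
  case (Suc k)
  have "(T ^^ Suc k) X = T (z ^ k \<cdot>\<^sub>m X)" using Suc by simp
  also have "\<dots> = z ^ k \<cdot>\<^sub>m (z \<cdot>\<^sub>m X)" using lin_smult[OF T X] e by simp
  also have "\<dots> = z ^ Suc k \<cdot>\<^sub>m X" using X by (auto intro!: eq_matI)
  finally show ?case .
qed

section \<open>Spectral values are eigenvalues\<close>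

definition mat_unit :: "nat \<Rightarrow> nat \<Rightarrow> nat \<Rightarrow> complex mat" where
  "mat_unit d i j = mat d d (\<lambda>(k,l). if (k,l) = (i,j) then 1 else 0)"

lemma mat_unit_dims [simp]: "dim_row (mat_unit d i j) = d" "dim_col (mat_unit d i j) = d"
  unfolding mat_unit_def by simp_all

lemma mat_unit_nonzero:
  assumes "i < d" "j < d"
  shows "mat_unit d i j \<noteq> 0\<^sub>m d d"
proof
  assume "mat_unit d i j = 0\<^sub>m d d"
  hence "mat_unit d i j $$ (i,j) = 0\<^sub>m d d $$ (i,j)" by simp
  thus False using assms by (simp add: mat_unit_def)
qed

lemma mat_nonzero_entry:
  assumes "X \<in> carrier_mat d d" and "X \<noteq> 0\<^sub>m d d"
  obtains i j where "i < d" "j < d" "X $$ (i,j) \<noteq> 0"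
proof -
  have "\<exists>i j. i < d \<and> j < d \<and> X $$ (i,j) \<noteq> 0"
  proof (rule ccontr)
    assume "\<not> ?thesis"
    hence "X = 0\<^sub>m d d" using assms(1) by (auto intro!: eq_matI)
    thus False using assms(2) by simp
  qed
  thus ?thesis using that by blast
qed

(* Row-major flattening identifies M_d with C^(d*d): index (k,l) <-> k*d + l. *)
lemma idx_div: "k < d \<Longrightarrow> l < d \<Longrightarrow> (k*d+l) div (d::nat) = k"
  by (simp add: add.commute[of "k*d"])

lemma idx_mod: "k < d \<Longrightarrow> l < d \<Longrightarrow> (k*d+l) mod (d::nat) = l"
  by (simp add: add.commute[of "k*d"])

lemma idx_lt:
  assumes k: "k < d" and l: "l < (d::nat)"
  shows "k*d+l < d*d"
proof -
  have "k*d+l < (k+1)*d" using l by simp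
  also have "\<dots> \<le> d*d" using mult_le_mono1[of "k+1" d d] k by simp
  finally show ?thesis .
qed

lemma div_lt: "p < d*d \<Longrightarrow> p div d < (d::nat)"
  by (simp add: less_mult_imp_div_less)

lemma mod_lt: "p < d*d \<Longrightarrow> p mod d < (d::nat)"
  by (metis mod_less_divisor mult_0_right neq0_conv not_less_zero)

definition flatten :: "nat \<Rightarrow> complex mat \<Rightarrow> complex vec" where
  "flatten d X = vec (d*d) (\<lambda>p. X $$ (p div d, p mod d))"

definition unflatten :: "nat \<Rightarrow> complex vec \<Rightarrow> complex mat" where
  "unflatten d v = mat d d (\<lambda>(i,j). v $ (i*d+j))"

lemma flatten_unflatten: "v \<in> carrier_vec (d*d) \<Longrightarrow> flatten d (unflatten d v) = v"
  unfolding flatten_def unflatten_def by (auto intro!: eq_vecI simp: div_lt mod_lt)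

lemma flatten_inj:
  assumes "X \<in> carrier_mat d d" "Y \<in> carrier_mat d d" "flatten d X = flatten d Y"
  shows "X = Y"
proof (rule eq_matI)
  fix i j assume "i < dim_row Y" "j < dim_col Y"
  hence i: "i < d" and j: "j < d" using assms by auto
  have "flatten d X $ (i*d+j) = flatten d Y $ (i*d+j)" using assms by simp
  thus "X $$ (i,j) = Y $$ (i,j)"
    unfolding flatten_def using idx_lt[OF i j] idx_div[OF i j] idx_mod[OF i j] by simp
qed (use assms in auto)

lemma lin_expand:
  assumes S: "lin_map_on d S" and X: "X \<in> carrier_mat d d" and i: "i < d" and j: "j < d"
  shows "S X $$ (i,j) = (\<Sum>q<d*d. X $$ (q div d, q mod d) * S (mat_unit d (q div d) (q mod d)) $$ (i,j))"
proof -
  let ?E = "\<lambda>q. mat_unit d (q div d) (q mod d)"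
  define Xm where "Xm m = mat d d (\<lambda>(k,l). if k*d+l < m then X $$ (k,l) else 0)" for m
  have XmC: "Xm m \<in> carrier_mat d d" for m unfolding Xm_def by simp
  have EC: "?E q \<in> carrier_mat d d" for q unfolding mat_unit_def by simp
  have step: "Xm (Suc m) = Xm m + X $$ (m div d, m mod d) \<cdot>\<^sub>m ?E m" for m
  proof (rule eq_matI)
    fix k l assume "k < dim_row (Xm m + X $$ (m div d, m mod d) \<cdot>\<^sub>m ?E m)"
      "l < dim_col (Xm m + X $$ (m div d, m mod d) \<cdot>\<^sub>m ?E m)"
    hence k: "k < d" and l: "l < d" by (auto simp: Xm_def)
    have "(k,l) = (m div d, m mod d) \<longleftrightarrow> k*d+l = m"
    proof
      assume "(k,l) = (m div d, m mod d)"
      thus "k*d+l = m" by simp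
    qed (use idx_div[OF k l] idx_mod[OF k l] in auto)
    hence "?E m $$ (k,l) = (if k*d+l = m then 1 else 0)"
      using k l by (simp add: mat_unit_def)
    thus "Xm (Suc m) $$ (k, l) = (Xm m + X $$ (m div d, m mod d) \<cdot>\<^sub>m ?E m) $$ (k, l)"
      using k l idx_div[OF k l] idx_mod[OF k l] by (cases "k*d+l = m") (auto simp: Xm_def)
  qed (auto simp: Xm_def)
  have partial: "S (Xm m) $$ (i,j) = (\<Sum>q<m. X $$ (q div d, q mod d) * S (?E q) $$ (i,j))" for m
  proof (induction m)
    case 0
    have "Xm 0 = 0\<^sub>m d d" unfolding Xm_def by (auto intro!: eq_matI)
    thus ?case using lin_zero[OF S] i j by simp
  next
    case (Suc m)
    have "S (Xm (Suc m)) = S (Xm m) + X $$ (m div d, m mod d) \<cdot>\<^sub>m S (?E m)"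
      unfolding step using lin_add[OF S XmC] lin_smult[OF S EC] EC by simp
    thus ?case using Suc lin_closed[OF S XmC, of m] lin_closed[OF S EC, of m] i j by simp
  qed
  have "Xm (d*d) = X"
  proof (rule eq_matI)
    fix k l assume "k < dim_row X" "l < dim_col X"
    thus "Xm (d*d) $$ (k,l) = X $$ (k,l)" using X idx_lt[of k d l] by (simp add: Xm_def)
  qed (use X in \<open>simp_all add: Xm_def\<close>)
  thus ?thesis using partial[of "d*d"] by simp
qed

(* An injective linear map on M_d is surjective: its (d*d) x (d*d) matrix has trivial
   kernel, hence nonzero determinant, hence an inverse. *)
lemma lin_surj_of_trivial_kernel:
  assumes S: "lin_map_on d S"
    and ker: "\<And>X. X \<in> carrier_mat d d \<Longrightarrow> S X = 0\<^sub>m d d \<Longrightarrow> X = 0\<^sub>m d d"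
    and Y: "Y \<in> carrier_mat d d"
  shows "\<exists>X\<in>carrier_mat d d. S X = Y"
proof -
  define n where "n = d*d"
  define A where "A = mat n n (\<lambda>(p,q). S (mat_unit d (q div d) (q mod d)) $$ (p div d, p mod d))"
  have AC: "A \<in> carrier_mat n n" unfolding A_def by simp
  have rep: "flatten d (S X) = A *\<^sub>v flatten d X" if X: "X \<in> carrier_mat d d" for X
  proof (rule eq_vecI)
    fix p assume "p < dim_vec (A *\<^sub>v flatten d X)"
    hence p: "p < n" unfolding A_def by simp
    have "flatten d (S X) $ p = S X $$ (p div d, p mod d)" using p unfolding flatten_def n_def by simp
    also have "\<dots> = (\<Sum>q<d*d. X $$ (q div d, q mod d) *
        S (mat_unit d (q div d) (q mod d)) $$ (p div d, p mod d))"
      by (rule lin_expand[OF S X]) (use p in \<open>auto simp: n_def div_lt mod_lt\<close>)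
    also have "\<dots> = (A *\<^sub>v flatten d X) $ p"
      using p unfolding A_def flatten_def n_def
      by (auto simp: lessThan_atLeast0 scalar_prod_def intro!: sum.cong)
    finally show "flatten d (S X) $ p = (A *\<^sub>v flatten d X) $ p" .
  qed (auto simp: flatten_def A_def n_def)
  have flatten_zero: "flatten d (0\<^sub>m d d) = 0\<^sub>v n"
    unfolding flatten_def n_def by (auto intro!: eq_vecI simp: div_lt mod_lt)
  have "det A \<noteq> 0"
  proof
    assume "det A = 0"
    then obtain v where v: "v \<in> carrier_vec n" "v \<noteq> 0\<^sub>v n" "A *\<^sub>v v = 0\<^sub>v n"
      using det_0_iff_vec_prod_zero[OF AC] by auto
    have uC: "unflatten d v \<in> carrier_mat d d" unfolding unflatten_def by simp
    have "flatten d (S (unflatten d v)) = flatten d (0\<^sub>m d d)"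
      using rep[OF uC] flatten_unflatten v flatten_zero unfolding n_def by simp
    hence "S (unflatten d v) = 0\<^sub>m d d" by (rule flatten_inj[OF lin_closed[OF S uC] zero_carrier_mat])
    hence "unflatten d v = 0\<^sub>m d d" using ker uC by blast
    hence "flatten d (unflatten d v) = 0\<^sub>v n" using flatten_zero by simp
    thus False using flatten_unflatten v unfolding n_def by simp
  qed
  then obtain B where B: "B \<in> carrier_mat n n" "A * B = 1\<^sub>m n"
    using det_non_zero_imp_unit[OF AC] unfolding Units_def by (auto simp: ring_mat_simps)
  define X where "X = unflatten d (B *\<^sub>v flatten d Y)"
  have flY: "flatten d Y \<in> carrier_vec n" unfolding flatten_def n_def by simp
  have XC: "X \<in> carrier_mat d d" unfolding X_def unflatten_def by simp
  have "flatten d (S X) = A *\<^sub>v (B *\<^sub>v flatten d Y)"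
    using rep[OF XC] flatten_unflatten B(1) flY unfolding X_def n_def by simp
  also have "\<dots> = flatten d Y"
    using assoc_mult_mat_vec[OF AC B(1) flY] B flY by simp
  finally have "S X = Y" by (rule flatten_inj[OF lin_closed[OF S XC] Y])
  thus ?thesis using XC by blast
qed

lemma lin_inj_of_trivial_kernel:
  assumes S: "lin_map_on d S"
    and ker: "\<And>X. X \<in> carrier_mat d d \<Longrightarrow> S X = 0\<^sub>m d d \<Longrightarrow> X = 0\<^sub>m d d"
  shows "inj_on S (carrier_mat d d)"
proof (rule inj_onI)
  fix X Y :: "complex mat"
  assume X: "X \<in> carrier_mat d d" and Y: "Y \<in> carrier_mat d d" and e: "S X = S Y"
  have YC: "(-1) \<cdot>\<^sub>m Y \<in> carrier_mat d d" using Y by simp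
  have "S (X + (-1) \<cdot>\<^sub>m Y) = S X + (-1) \<cdot>\<^sub>m S Y"
    using lin_add[OF S X YC] lin_smult[OF S Y] by simp
  also have "\<dots> = 0\<^sub>m d d"
    unfolding e using carrier_matD[OF lin_closed[OF S Y]] by (auto intro!: eq_matI)
  finally have h: "X + (-1) \<cdot>\<^sub>m Y = 0\<^sub>m d d" using ker X YC by simp
  show "X = Y"
  proof (rule eq_matI)
    fix i j assume "i < dim_row Y" "j < dim_col Y"
    hence "i < d" "j < d" using Y by auto
    moreover have "(X + (-1) \<cdot>\<^sub>m Y) $$ (i,j) = 0" using h \<open>i < d\<close> \<open>j < d\<close> by simp
    ultimately show "X $$ (i,j) = Y $$ (i,j)" using X Y by simp
  qed (use X Y in auto)
qed

lemma spec_set_eigen: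
  assumes T: "lin_map_on d T"
  shows "z \<in> spec_set d T \<longleftrightarrow> (\<exists>X\<in>carrier_mat d d. X \<noteq> 0\<^sub>m d d \<and> T X = z \<cdot>\<^sub>m X)"
proof -
  let ?S = "\<lambda>X. T X - z \<cdot>\<^sub>m X"
  have S: "lin_map_on d ?S" by (rule lin_minus_scalar[OF T])
  have kernel: "?S X = 0\<^sub>m d d \<longleftrightarrow> T X = z \<cdot>\<^sub>m X" if X: "X \<in> carrier_mat d d" for X
  proof
    assume h: "?S X = 0\<^sub>m d d"
    show "T X = z \<cdot>\<^sub>m X"
    proof (rule eq_matI)
      fix i j assume "i < dim_row (z \<cdot>\<^sub>m X)" "j < dim_col (z \<cdot>\<^sub>m X)"
      hence "i < d" "j < d" using X by auto
      moreover have "?S X $$ (i,j) = 0" using h \<open>i < d\<close> \<open>j < d\<close> by simp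
      ultimately show "T X $$ (i,j) = (z \<cdot>\<^sub>m X) $$ (i,j)" using X lin_closed[OF T X] by simp
    qed (use X lin_closed[OF T X] in auto)
  qed (use X in \<open>auto intro!: eq_matI\<close>)
  show ?thesis
  proof
    assume z: "z \<in> spec_set d T"
    show "\<exists>X\<in>carrier_mat d d. X \<noteq> 0\<^sub>m d d \<and> T X = z \<cdot>\<^sub>m X"
    proof (rule ccontr)
      assume "\<not> ?thesis"
      hence ker: "X \<in> carrier_mat d d \<Longrightarrow> ?S X = 0\<^sub>m d d \<Longrightarrow> X = 0\<^sub>m d d" for X
        using kernel by blast
      have "bij_betw ?S (carrier_mat d d) (carrier_mat d d)"
        unfolding bij_betw_def using lin_inj_of_trivial_kernel[OF S ker]
          lin_closed[OF S] lin_surj_of_trivial_kernel[OF S ker] by blast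
      thus False using z unfolding spec_set_def by auto
    qed
  next
    assume "\<exists>X\<in>carrier_mat d d. X \<noteq> 0\<^sub>m d d \<and> T X = z \<cdot>\<^sub>m X"
    then obtain X where X: "X \<in> carrier_mat d d" "X \<noteq> 0\<^sub>m d d" "T X = z \<cdot>\<^sub>m X" by blast
    have "?S X = ?S (0\<^sub>m d d)" using kernel[OF X(1)] X lin_zero[OF S] by simp
    hence "\<not> inj_on ?S (carrier_mat d d)" using X by (meson inj_onD zero_carrier_mat)
    thus "z \<in> spec_set d T" unfolding spec_set_def bij_betw_def by auto
  qed
qed

section \<open>Positive maps commute with the adjoint\<close>

definition adj :: "complex mat \<Rightarrow> complex mat" where
  "adj A = mat (dim_col A) (dim_row A) (\<lambda>(i,j). cnj (A $$ (j,i)))"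

lemma adj_dims [simp]: "dim_row (adj A) = dim_col A" "dim_col (adj A) = dim_row A"
  unfolding adj_def by auto

lemma adj_carrier: "A \<in> carrier_mat n n \<Longrightarrow> adj A \<in> carrier_mat n n"
  unfolding adj_def by auto

lemma adj_adj: "A \<in> carrier_mat n n \<Longrightarrow> adj (adj A) = A"
  unfolding adj_def by (auto intro!: eq_matI)

lemma adj_smult: "adj (c \<cdot>\<^sub>m A) = cnj c \<cdot>\<^sub>m adj A"
  unfolding adj_def by (auto intro!: eq_matI)

lemma psd_adj:
  assumes P: "psd_mat n P"
  shows "adj P = P"
proof (rule eq_matI)
  have C: "P \<in> carrier_mat n n" using psd_carrier[OF P] .
  fix i j assume "i < dim_row P" "j < dim_col P"
  hence i: "i < n" and j: "j < n" using C by auto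
  show "adj P $$ (i,j) = P $$ (i,j)"
    using i j C psd_herm[OF P j i] unfolding adj_def by simp
qed (use psd_carrier[OF assms] in \<open>auto simp: adj_def\<close>)

lemma adj_comb4:
  assumes C: "P1 \<in> carrier_mat n n" "P2 \<in> carrier_mat n n" "P3 \<in> carrier_mat n n" "P4 \<in> carrier_mat n n"
  shows "adj (comb4 a b c e P1 P2 P3 P4)
       = comb4 (cnj a) (cnj b) (cnj c) (cnj e) (adj P1) (adj P2) (adj P3) (adj P4)"
proof -
  have C': "adj P1 \<in> carrier_mat n n" "adj P2 \<in> carrier_mat n n" "adj P3 \<in> carrier_mat n n"
    "adj P4 \<in> carrier_mat n n"
    using C adj_carrier by auto
  have L: "comb4 a b c e P1 P2 P3 P4 \<in> carrier_mat n n" by (rule comb4_carrier[OF C])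
  have L': "comb4 (cnj a) (cnj b) (cnj c) (cnj e) (adj P1) (adj P2) (adj P3) (adj P4) \<in> carrier_mat n n"
    by (rule comb4_carrier[OF C'])
  show ?thesis
  proof (rule eq_matI)
    fix i j
    assume "i < dim_row (comb4 (cnj a) (cnj b) (cnj c) (cnj e) (adj P1) (adj P2) (adj P3) (adj P4))"
      "j < dim_col (comb4 (cnj a) (cnj b) (cnj c) (cnj e) (adj P1) (adj P2) (adj P3) (adj P4))"
    hence i: "i < n" and j: "j < n" using L' by auto
    show "adj (comb4 a b c e P1 P2 P3 P4) $$ (i, j)
        = comb4 (cnj a) (cnj b) (cnj c) (cnj e) (adj P1) (adj P2) (adj P3) (adj P4) $$ (i, j)"
      unfolding comb4_index[OF C' i j] using L C i j comb4_index[OF C j i] by (simp add: adj_def)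
  qed (use carrier_matD[OF L] carrier_matD[OF L'] in simp_all)
qed

(* T (adj X) = adj (T X): write X = P1 - P2 + i P3 - i P4 with PSD P_k; then adj X and
   adj (T X) are the same combinations with i replaced by -i, as the T P_k are again PSD. *)
lemma positive_map_adj:
  assumes T: "lin_map_on d T" and P: "positive_map d T" and X: "X \<in> carrier_mat d d"
  shows "T (adj X) = adj (T X)"
proof -
  obtain P1 P2 P3 P4 where ps: "psd_mat d P1" "psd_mat d P2" "psd_mat d P3" "psd_mat d P4"
    and XP: "X = comb4 1 (-1) \<i> (-\<i>) P1 P2 P3 P4" using psd_decomp[OF X] by blast
  have C: "P1 \<in> carrier_mat d d" "P2 \<in> carrier_mat d d" "P3 \<in> carrier_mat d d" "P4 \<in> carrier_mat d d"
    using ps psd_carrier by auto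
  have ps': "psd_mat d (T P1)" "psd_mat d (T P2)" "psd_mat d (T P3)" "psd_mat d (T P4)"
    using ps P unfolding positive_map_def by auto
  have C': "T P1 \<in> carrier_mat d d" "T P2 \<in> carrier_mat d d" "T P3 \<in> carrier_mat d d" "T P4 \<in> carrier_mat d d"
    using ps' psd_carrier by auto
  have "T (adj X) = T (comb4 1 (-1) (-\<i>) \<i> P1 P2 P3 P4)"
    unfolding XP adj_comb4[OF C] psd_adj[OF ps(1)] psd_adj[OF ps(2)] psd_adj[OF ps(3)] psd_adj[OF ps(4)]
    by simp
  also have "\<dots> = comb4 1 (-1) (-\<i>) \<i> (T P1) (T P2) (T P3) (T P4)" by (rule lin_comb4[OF T C])
  also have "\<dots> = adj (T X)"
    unfolding XP lin_comb4[OF T C] adj_comb4[OF C']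
      psd_adj[OF ps'(1)] psd_adj[OF ps'(2)] psd_adj[OF ps'(3)] psd_adj[OF ps'(4)]
    by simp
  finally show ?thesis .
qed

section \<open>Necessary conditions on the spectral set of a positive trace-preserving map\<close>

(* If T X = z X then T (adj X) = cnj z adj X, so the spectral set is conjugation-closed. *)
lemma spec_set_cnj_closed:
  assumes T: "lin_map_on d T" and P: "positive_map d T"
  shows "cnj ` spec_set d T = spec_set d T"
proof -
  have cnj_mem: "cnj z \<in> spec_set d T" if "z \<in> spec_set d T" for z
  proof -
    have "\<exists>X\<in>carrier_mat d d. X \<noteq> 0\<^sub>m d d \<and> T X = z \<cdot>\<^sub>m X"
      using that spec_set_eigen[OF T] by simp
    then obtain X where X: "X \<in> carrier_mat d d" "X \<noteq> 0\<^sub>m d d" "T X = z \<cdot>\<^sub>m X"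
      by blast
    have "adj X \<noteq> 0\<^sub>m d d"
    proof
      assume "adj X = 0\<^sub>m d d"
      hence "X = adj (0\<^sub>m d d)" using adj_adj[OF X(1)] by simp
      also have "adj (0\<^sub>m d d) = 0\<^sub>m d d" unfolding adj_def by (auto intro!: eq_matI)
      finally show False using X(2) by simp
    qed
    moreover have "T (adj X) = cnj z \<cdot>\<^sub>m adj X"
      unfolding positive_map_adj[OF T P X(1)] X(3) by (rule adj_smult)
    ultimately show ?thesis using spec_set_eigen[OF T] adj_carrier[OF X(1)] by blast
  qed
  hence "cnj ` spec_set d T \<subseteq> spec_set d T" by blast
  moreover have "spec_set d T \<subseteq> cnj ` spec_set d T"
  proof
    fix z assume "z \<in> spec_set d T"
    thus "z \<in> cnj ` spec_set d T" using cnj_mem by (intro image_eqI[where x="cnj z"]) auto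
  qed
  ultimately show ?thesis by blast
qed

(* T - id maps into the trace-zero matrices, so it misses the identity when d > 0. *)
lemma one_in_spec_set:
  assumes d: "0 < d" and T: "lin_map_on d T" and TP: "trace_preserving d T"
  shows "1 \<in> spec_set d T"
proof (rule ccontr)
  assume "1 \<notin> spec_set d T"
  hence "1\<^sub>m d \<in> (\<lambda>X. T X - 1 \<cdot>\<^sub>m X) ` carrier_mat d d"
    unfolding spec_set_def bij_betw_def by simp
  then obtain X where e: "1\<^sub>m d = T X - 1 \<cdot>\<^sub>m X" and X: "X \<in> carrier_mat d d"
    by (rule imageE)
  have TX: "T X \<in> carrier_mat d d" by (rule lin_closed[OF T X])
  have "(\<Sum>i<d. (1\<^sub>m d :: complex mat) $$ (i,i)) = (\<Sum>i<d. T X $$ (i,i) - X $$ (i,i))"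
    unfolding e using X TX by (auto intro!: sum.cong)
  also have "\<dots> = 0" using TP X unfolding trace_preserving_def by (simp add: sum_subtractf)
  finally show False using d by simp
qed

lemma iterate_psd_entry_bound:
  assumes T: "lin_map_on d T" and P: "positive_map d T" and TP: "trace_preserving d T"
    and Q: "psd_mat d Q" and i: "i < d" and j: "j < d"
  shows "cmod (((T ^^ k) Q) $$ (i,j)) \<le> Re (\<Sum>m<d. Q $$ (m,m))"
proof -
  have It: "positive_map d (T ^^ k)" "trace_preserving d (T ^^ k)"
    using iterate_props[OF T P TP] by auto
  have "psd_mat d ((T ^^ k) Q)" using It(1) Q unfolding positive_map_def by auto
  hence "cmod (((T ^^ k) Q) $$ (i,j)) \<le> Re (\<Sum>m<d. ((T ^^ k) Q) $$ (m,m))"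
    by (rule psd_entry_trace[OF _ i j])
  also have "(\<Sum>m<d. ((T ^^ k) Q) $$ (m,m)) = (\<Sum>m<d. Q $$ (m,m))"
    using It(2) psd_carrier[OF Q] unfolding trace_preserving_def by blast
  finally show ?thesis .
qed

lemma iterate_entry_bounded:
  assumes T: "lin_map_on d T" and P: "positive_map d T" and TP: "trace_preserving d T"
    and X: "X \<in> carrier_mat d d" and i: "i < d" and j: "j < d"
  shows "\<exists>B. \<forall>k. cmod (((T ^^ k) X) $$ (i,j)) \<le> B"
proof -
  obtain P1 P2 P3 P4 where ps: "psd_mat d P1" "psd_mat d P2" "psd_mat d P3" "psd_mat d P4"
    and XP: "X = comb4 1 (-1) \<i> (-\<i>) P1 P2 P3 P4" using psd_decomp[OF X] by blast
  have C: "P1 \<in> carrier_mat d d" "P2 \<in> carrier_mat d d" "P3 \<in> carrier_mat d d" "P4 \<in> carrier_mat d d"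
    using ps psd_carrier by auto
  let ?tr = "\<lambda>Q. Re (\<Sum>m<d. Q $$ (m,m))"
  have "cmod (((T ^^ k) X) $$ (i,j)) \<le> ?tr P1 + ?tr P2 + ?tr P3 + ?tr P4" for k
  proof -
    let ?Q = "\<lambda>P. ((T ^^ k) P) $$ (i,j)"
    have L: "lin_map_on d (T ^^ k)" using iterate_props[OF T P TP] by auto
    have CT: "(T ^^ k) P1 \<in> carrier_mat d d" "(T ^^ k) P2 \<in> carrier_mat d d"
      "(T ^^ k) P3 \<in> carrier_mat d d" "(T ^^ k) P4 \<in> carrier_mat d d"
      using lin_closed[OF L] C by auto
    have "((T ^^ k) X) $$ (i,j) = ?Q P1 - ?Q P2 + \<i> * ?Q P3 - \<i> * ?Q P4"
      unfolding XP lin_comb4[OF L C] comb4_index[OF CT i j] by simp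
    also have "cmod \<dots> \<le> cmod (?Q P1) + cmod (?Q P2) + cmod (?Q P3) + cmod (?Q P4)"
      by (rule order_trans[OF norm_triangle_ineq4], rule add_mono,
          rule order_trans[OF norm_triangle_ineq], rule add_mono,
          rule order_trans[OF norm_triangle_ineq4], auto simp: norm_mult)
    also have "\<dots> \<le> ?tr P1 + ?tr P2 + ?tr P3 + ?tr P4"
      using iterate_psd_entry_bound[OF T P TP _ i j] ps by (intro add_mono) auto
    finally show ?thesis .
  qed
  thus ?thesis by blast
qed

(* An eigenvalue with |z| > 1 would make the orbit of its eigenmatrix unbounded. *)
lemma spec_set_norm_le_one:
  assumes T: "lin_map_on d T" and P: "positive_map d T" and TP: "trace_preserving d T"
    and z: "z \<in> spec_set d T"
  shows "cmod z \<le> 1"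
proof (rule ccontr)
  assume "\<not> cmod z \<le> 1"
  hence gt: "1 < cmod z" by simp
  have "\<exists>X\<in>carrier_mat d d. X \<noteq> 0\<^sub>m d d \<and> T X = z \<cdot>\<^sub>m X"
    using z spec_set_eigen[OF T] by simp
  then obtain X where X: "X \<in> carrier_mat d d" "X \<noteq> 0\<^sub>m d d" "T X = z \<cdot>\<^sub>m X"
    by blast
  obtain i j where ij: "i < d" "j < d" "X $$ (i,j) \<noteq> 0" using mat_nonzero_entry[OF X(1,2)] .
  obtain B where B: "\<And>k. cmod (((T ^^ k) X) $$ (i,j)) \<le> B"
    using iterate_entry_bounded[OF T P TP X(1) ij(1,2)] by blast
  have orbit: "((T ^^ k) X) $$ (i,j) = z ^ k * X $$ (i,j)" for k
    using iterate_eigen[OF T X(1,3)] X(1) ij by simp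
  have xp: "cmod (X $$ (i,j)) > 0" using ij(3) by simp
  obtain k where "B / cmod (X $$ (i,j)) < cmod z ^ k" using real_arch_pow[OF gt] by blast
  hence "B < cmod z ^ k * cmod (X $$ (i,j))" using xp by (simp add: divide_less_eq)
  thus False using B[of k] unfolding orbit by (simp add: norm_mult norm_power)
qed

section \<open>Schur multipliers\<close>

definition schur :: "nat \<Rightarrow> (nat \<Rightarrow> nat \<Rightarrow> complex) \<Rightarrow> complex mat \<Rightarrow> complex mat" where
  "schur d M X = mat d d (\<lambda>(i,j). M i j * X $$ (i,j))"

lemma schur_index: "i < d \<Longrightarrow> j < d \<Longrightarrow> schur d M X $$ (i,j) = M i j * X $$ (i,j)"
  unfolding schur_def by simp

lemma lin_schur: "lin_map_on d (schur d M)"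
  unfolding lin_map_on_def schur_def by (auto intro!: eq_matI simp: algebra_simps)

lemma trace_preserving_schur:
  assumes "\<And>i. i < d \<Longrightarrow> M i i = 1"
  shows "trace_preserving d (schur d M)"
  unfolding trace_preserving_def schur_def using assms by auto

(* Schur product theorem: the entrywise product of a PSD matrix with a Gram matrix
   N_pq = sum_r cnj (w_r p) * w_r q is PSD, since its quadratic form splits as a sum of
   quadratic forms of the PSD factor. *)
lemma psd_schur_gram:
  assumes Y: "psd_mat n Y" and fin: "finite I"
    and N: "\<And>p q. p < n \<Longrightarrow> q < n \<Longrightarrow> N p q = (\<Sum>r\<in>I. cnj (w r p) * w r q)"
  shows "psd_mat n (mat n n (\<lambda>(p,q). N p q * Y $$ (p,q)))"
proof -
  have Yq: "\<And>v. Im (qf n Y v) = 0 \<and> Re (qf n Y v) \<ge> 0" using Y unfolding psd_mat_qf by auto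
  have split: "qf n (mat n n (\<lambda>(p,q). N p q * Y $$ (p,q))) v = (\<Sum>r\<in>I. qf n Y (\<lambda>i. v i * w r i))" for v
  proof -
    have "qf n (mat n n (\<lambda>(p,q). N p q * Y $$ (p,q))) v
        = (\<Sum>i<n. \<Sum>j<n. \<Sum>r\<in>I. cnj (v i * w r i) * Y $$ (i, j) * (v j * w r j))"
      unfolding qf_def
      by (rule sum.cong[OF refl], rule sum.cong[OF refl])
         (simp add: N sum_distrib_left sum_distrib_right algebra_simps)
    also have "\<dots> = (\<Sum>i<n. \<Sum>r\<in>I. \<Sum>j<n. cnj (v i * w r i) * Y $$ (i, j) * (v j * w r j))"
      by (rule sum.cong[OF refl], rule sum.swap)
    also have "\<dots> = (\<Sum>r\<in>I. \<Sum>i<n. \<Sum>j<n. cnj (v i * w r i) * Y $$ (i, j) * (v j * w r j))"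
      by (rule sum.swap)
    finally show ?thesis unfolding qf_def .
  qed
  show ?thesis unfolding psd_mat_qf split
    using Yq by (simp add: Im_sum Re_sum sum_nonneg)
qed

lemma completely_positive_schur:
  assumes fin: "finite I"
    and M: "\<And>p q. p < d \<Longrightarrow> q < d \<Longrightarrow> M p q = (\<Sum>r\<in>I. cnj (w r p) * w r q)"
  shows "completely_positive d (schur d M)"
  unfolding completely_positive_def
proof (intro allI impI)
  fix Y assume Y: "psd_mat (d*d) Y"
  (* schur d M tensored with the identity is again a Schur multiplier, with symbol M (p div d) (q div d) *)
  have eq: "tensor_id d (schur d M) Y = mat (d*d) (d*d) (\<lambda>(p,q). M (p div d) (q div d) * Y $$ (p,q))"
  proof (rule eq_matI)
    fix p q assume "p < dim_row (mat (d*d) (d*d) (\<lambda>(p,q). M (p div d) (q div d) * Y $$ (p,q)))"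
      "q < dim_col (mat (d*d) (d*d) (\<lambda>(p,q). M (p div d) (q div d) * Y $$ (p,q)))"
    hence p: "p < d*d" and q: "q < d*d" by auto
    have "p div d * d + p mod d = p" "q div d * d + q mod d = q" by auto
    thus "tensor_id d (schur d M) Y $$ (p, q)
        = mat (d*d) (d*d) (\<lambda>(p,q). M (p div d) (q div d) * Y $$ (p,q)) $$ (p, q)"
      unfolding tensor_id_def schur_def using p q div_lt[OF p] div_lt[OF q] by simp
  qed (auto simp: tensor_id_def)
  show "psd_mat (d*d) (tensor_id d (schur d M) Y)"
    unfolding eq
    by (rule psd_schur_gram[OF Y fin, where w="\<lambda>r p. w r (p div d)"]) (auto intro!: M simp: div_lt)
qed

(* The spectral set of a Schur multiplier is the set of its symbol's entries: the matrix
   units are a complete system of eigenmatrices. *)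
lemma spec_set_schur: "spec_set d (schur d M) = {M i j | i j. i < d \<and> j < d}"
proof (rule Set.set_eqI)
  fix z
  show "z \<in> spec_set d (schur d M) \<longleftrightarrow> z \<in> {M i j | i j. i < d \<and> j < d}"
    unfolding spec_set_eigen[OF lin_schur]
  proof
    assume "\<exists>X\<in>carrier_mat d d. X \<noteq> 0\<^sub>m d d \<and> schur d M X = z \<cdot>\<^sub>m X"
    then obtain X where X: "X \<in> carrier_mat d d" "X \<noteq> 0\<^sub>m d d" "schur d M X = z \<cdot>\<^sub>m X" by blast
    obtain i j where ij: "i < d" "j < d" "X $$ (i,j) \<noteq> 0" using mat_nonzero_entry[OF X(1,2)] .
    have "M i j * X $$ (i,j) = z * X $$ (i,j)"
      using arg_cong[OF X(3), of "\<lambda>A. A $$ (i,j)"] X(1) ij by (simp add: schur_index)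
    thus "z \<in> {M i j | i j. i < d \<and> j < d}" using ij by auto
  next
    assume "z \<in> {M i j | i j. i < d \<and> j < d}"
    then obtain i j where ij: "i < d" "j < d" and z: "z = M i j" by auto
    have "schur d M (mat_unit d i j) = z \<cdot>\<^sub>m mat_unit d i j"
      unfolding z by (auto intro!: eq_matI simp: schur_def mat_unit_def)
    thus "\<exists>X\<in>carrier_mat d d. X \<noteq> 0\<^sub>m d d \<and> schur d M X = z \<cdot>\<^sub>m X"
      using mat_unit_nonzero[OF ij] by (intro bexI[of _ "mat_unit d i j"]) (auto simp: mat_unit_def)
  qed
qed

section \<open>Realising a prescribed spectral set\<close>

(* Block-diagonal symbol with 2x2 blocks [1, mu b; cnj (mu b), 1] on the indices 2b, 2b+1. *)
definition pair_block :: "(nat \<Rightarrow> complex) \<Rightarrow> nat \<Rightarrow> nat \<Rightarrow> complex" where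
  "pair_block \<mu> i j = (if i div 2 = j div 2 then
      (if i = j then 1 else if even i then \<mu> (i div 2) else cnj (\<mu> (i div 2))) else 0)"

(* Gram vectors of the block b: (1, mu b) and (0, sqrt (1 - |mu b|^2)) on the indices 2b, 2b+1. *)
fun pair_gram :: "(nat \<Rightarrow> complex) \<Rightarrow> nat \<times> bool \<Rightarrow> nat \<Rightarrow> complex" where
  "pair_gram \<mu> (b, True) p = (if p = 2*b then 1 else if p = 2*b+1 then \<mu> b else 0)"
| "pair_gram \<mu> (b, False) p =
     (if p = 2*b+1 then complex_of_real (sqrt (1 - (cmod (\<mu> b))^2)) else 0)"

lemma pair_gram_outside: "p div 2 \<noteq> b \<Longrightarrow> pair_gram \<mu> (b, t) p = 0"
  by (cases t) auto

(* Within the block containing p, the symbol is the Gram matrix of the two vectors;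
   this needs 1 - |mu|^2 >= 0. *)
lemma pair_block_gram_entry:
  assumes mu: "cmod (\<mu> (p div 2)) \<le> 1"
  shows "pair_block \<mu> p q = cnj (pair_gram \<mu> (p div 2, True) p) * pair_gram \<mu> (p div 2, True) q
                          + cnj (pair_gram \<mu> (p div 2, False) p) * pair_gram \<mu> (p div 2, False) q"
proof -
  define a where "a = p div 2"
  have p: "p = 2*a \<or> p = 2*a+1" unfolding a_def by presburger
  show ?thesis
  proof (cases "q div 2 = a")
    case False
    hence "pair_gram \<mu> (a, t) q = 0" for t using pair_gram_outside by blast
    moreover have "pair_block \<mu> p q = 0" using False unfolding pair_block_def a_def by auto
    ultimately show ?thesis unfolding a_def[symmetric] by (simp del: pair_gram.simps)
  next
    case True
    hence q: "q = 2*a \<or> q = 2*a+1" by presburger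
    have "0 \<le> 1 - (cmod (\<mu> a))^2"
      using power_le_one[OF norm_ge_zero mu, of 2] unfolding a_def by simp
    hence "sqrt (1 - (cmod (\<mu> a))^2) * sqrt (1 - (cmod (\<mu> a))^2) = 1 - (cmod (\<mu> a))^2" by simp
    hence s: "complex_of_real (sqrt (1 - (cmod (\<mu> a))^2)) * complex_of_real (sqrt (1 - (cmod (\<mu> a))^2))
        = 1 - complex_of_real ((cmod (\<mu> a))^2)"
      by (metis of_real_1 of_real_diff of_real_mult)
    have n: "cnj (\<mu> a) * \<mu> a = complex_of_real ((cmod (\<mu> a))^2)"
      by (simp add: complex_norm_square mult.commute del: of_real_power)
    have e: "(2*a) div 2 = a" "(2*a+1) div 2 = a" by auto
    from p q show ?thesis unfolding a_def[symmetric] pair_block_def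
      by (elim disjE) (simp_all only: e, simp_all add: s n)
  qed
qed

lemma pair_block_gram:
  assumes mu: "\<And>b. b < K \<Longrightarrow> cmod (\<mu> b) \<le> 1" and p: "p < 2*K"
  shows "pair_block \<mu> p q = (\<Sum>r\<in>{..<K}\<times>(UNIV::bool set). cnj (pair_gram \<mu> r p) * pair_gram \<mu> r q)"
proof -
  let ?F = "\<lambda>r. cnj (pair_gram \<mu> r p) * pair_gram \<mu> r q"
  have "(\<Sum>r\<in>{..<K}\<times>(UNIV::bool set). ?F r) = (\<Sum>b<K. \<Sum>t\<in>(UNIV::bool set). ?F (b,t))"
    by (simp add: sum.cartesian_product case_prod_unfold)
  also have "\<dots> = (\<Sum>b<K. ?F (b,True) + ?F (b,False))"
    by (simp add: UNIV_bool add.commute)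
  also have "\<dots> = (\<Sum>b\<in>{p div 2}. ?F (b,True) + ?F (b,False))"
    by (rule sum.mono_neutral_right) (use p pair_gram_outside in auto)
  also have "\<dots> = pair_block \<mu> p q" using pair_block_gram_entry[of \<mu> p q] mu[of "p div 2"] p by simp
  finally show ?thesis by simp
qed

lemma pair_block_entries:
  assumes K: "0 < K"
  shows "{pair_block \<mu> i j | i j. i < 2*K \<and> j < 2*K} - {0}
       = insert 1 (\<mu> ` {..<K} \<union> cnj ` \<mu> ` {..<K}) - {0}"
proof
  show "{pair_block \<mu> i j | i j. i < 2*K \<and> j < 2*K} - {0}
      \<subseteq> insert 1 (\<mu> ` {..<K} \<union> cnj ` \<mu> ` {..<K}) - {0}"
    by (auto simp: pair_block_def less_mult_imp_div_less)
  show "insert 1 (\<mu> ` {..<K} \<union> cnj ` \<mu> ` {..<K}) - {0}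
      \<subseteq> {pair_block \<mu> i j | i j. i < 2*K \<and> j < 2*K} - {0}"
  proof
    fix z assume z: "z \<in> insert 1 (\<mu> ` {..<K} \<union> cnj ` \<mu> ` {..<K}) - {0}"
    have "\<exists>i j. z = pair_block \<mu> i j \<and> i < 2*K \<and> j < 2*K"
    proof -
      consider "z = 1" | b where "b < K" "z = \<mu> b" | b where "b < K" "z = cnj (\<mu> b)"
        using z by auto
      thus ?thesis
      proof cases
        case 1
        thus ?thesis using K by (intro exI[of _ 0]) (simp add: pair_block_def)
      next
        case (2 b)
        thus ?thesis by (intro exI[of _ "2*b"] exI[of _ "2*b+1"]) (simp add: pair_block_def)
      next
        case (3 b)
        thus ?thesis by (intro exI[of _ "2*b+1"] exI[of _ "2*b"]) (simp add: pair_block_def)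
      qed
    qed
    thus "z \<in> {pair_block \<mu> i j | i j. i < 2*K \<and> j < 2*K} - {0}" using z by blast
  qed
qed

(* Choose one representative of each conjugate pair in Lambda - {1}: those with positive
   imaginary part and the real ones (or just 1 if there are none). *)
lemma conjugate_representatives:
  fixes \<Lambda> :: "complex set"
  assumes fin: "finite \<Lambda>" and cj: "cnj ` \<Lambda> = \<Lambda>" and one: "1 \<in> \<Lambda>"
  obtains K \<mu> where "0 < K" "K \<le> max (card \<Lambda> - 1) 1" "\<mu> ` {..<K} \<subseteq> \<Lambda>"
    "\<Lambda> \<subseteq> insert 1 (\<mu> ` {..<K} \<union> cnj ` \<mu> ` {..<K})"
proof -
  define R where "R = {z\<in>\<Lambda>. 0 < Im z \<or> (Im z = 0 \<and> z \<noteq> 1)}"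
  define R' where "R' = (if R = {} then {1} else R)"
  have R'sub: "R' \<subseteq> \<Lambda>" unfolding R'_def R_def using one by auto
  have finR': "finite R'" using R'sub fin finite_subset by blast
  define K where "K = card R'"
  have K: "0 < K" unfolding K_def using finR' by (simp add: card_gt_0_iff R'_def)
  have "K \<le> max (card \<Lambda> - 1) 1"
  proof (cases "R = {}")
    case False
    have "R \<subseteq> \<Lambda> - {1}" unfolding R_def by auto
    hence "card R \<le> card \<Lambda> - 1" using fin one card_mono[of "\<Lambda> - {1}" R] by simp
    thus ?thesis unfolding K_def R'_def using False by simp
  qed (simp add: K_def R'_def)
  moreover obtain \<mu> where bij: "bij_betw \<mu> {..<K} R'"
    using ex_bij_betw_nat_finite[OF finR'] unfolding K_def atLeast0LessThan by blast
  moreover have "\<Lambda> \<subseteq> insert 1 (\<mu> ` {..<K} \<union> cnj ` \<mu> ` {..<K})"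
  proof
    fix z assume z: "z \<in> \<Lambda>"
    have "R \<subseteq> \<mu> ` {..<K}" using bij unfolding bij_betw_def R'_def by auto
    moreover have "z = 1 \<or> z \<in> R \<or> cnj z \<in> R"
      using z cj unfolding R_def by (cases "Im z" rule: linorder_cases) auto
    ultimately show "z \<in> insert 1 (\<mu> ` {..<K} \<union> cnj ` \<mu> ` {..<K})"
      by (metis (no_types, lifting) UnI1 UnI2 complex_cnj_cnj image_eqI insertI1 insertI2 subsetD)
  qed
  ultimately show ?thesis using that K R'sub unfolding bij_betw_def by blast
qed

lemma realise_spectral_set:
  fixes \<Lambda> :: "complex set"
  assumes fin: "finite \<Lambda>" and n0: "0 \<notin> \<Lambda>" and cj: "cnj ` \<Lambda> = \<Lambda>" and one: "1 \<in> \<Lambda>"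
    and le: "\<forall>z\<in>\<Lambda>. cmod z \<le> 1"
  shows "\<exists>d T. 0 < d \<and> d \<le> 2 * max (card \<Lambda> - 1) 1 \<and>
           lin_map_on d T \<and> completely_positive d T \<and> trace_preserving d T \<and>
           spec_set d T - {0} = \<Lambda>"
proof -
  obtain K \<mu> where K: "0 < K" "K \<le> max (card \<Lambda> - 1) 1" and mu: "\<mu> ` {..<K} \<subseteq> \<Lambda>"
    and cover: "\<Lambda> \<subseteq> insert 1 (\<mu> ` {..<K} \<union> cnj ` \<mu> ` {..<K})"
    using conjugate_representatives[OF fin cj one] by blast
  define T where "T = schur (2*K) (pair_block \<mu>)"
  have "completely_positive (2*K) T" unfolding T_def
    by (rule completely_positive_schur[where I="{..<K}\<times>(UNIV::bool set)" and w="pair_gram \<mu>"])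
       (use mu le in \<open>auto intro!: pair_block_gram\<close>)
  moreover have "trace_preserving (2*K) T"
    unfolding T_def by (rule trace_preserving_schur) (simp add: pair_block_def)
  moreover have "spec_set (2*K) T - {0} = \<Lambda>"
  proof -
    have "cnj ` \<mu> ` {..<K} \<subseteq> \<Lambda>" using mu cj by blast
    hence "insert 1 (\<mu> ` {..<K} \<union> cnj ` \<mu> ` {..<K}) \<subseteq> \<Lambda>" using one mu by simp
    hence "insert 1 (\<mu> ` {..<K} \<union> cnj ` \<mu> ` {..<K}) - {0} = \<Lambda>" using cover n0 by blast
    thus ?thesis unfolding T_def spec_set_schur pair_block_entries[OF K(1)] .
  qed
  moreover have "lin_map_on (2*K) T" unfolding T_def by (rule lin_schur)
  ultimately show ?thesis using K by (intro exI[of _ "2*K"] exI[of _ T]) simp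
qed

theorem theorem3:
  shows "(\<forall>\<Lambda> :: complex set.
            finite \<Lambda> \<and> 0 \<notin> \<Lambda> \<and> cnj ` \<Lambda> = \<Lambda> \<and> 1 \<in> \<Lambda> \<and> (\<forall>z\<in>\<Lambda>. cmod z \<le> 1) \<longrightarrow>
            (\<exists>d T. 0 < d \<and> d \<le> 2 * max (card \<Lambda> - 1) 1 \<and>
                   lin_map_on d T \<and> completely_positive d T \<and> trace_preserving d T \<and>
                   spec_set d T - {0} = \<Lambda>))
       \<and> (\<forall>d T. 0 < d \<and> lin_map_on d T \<and> positive_map d T \<and> trace_preserving d T \<longrightarrow>
            cnj ` spec_set d T = spec_set d T \<and> 1 \<in> spec_set d T \<and>
            (\<forall>z\<in>spec_set d T. cmod z \<le> 1))"
proof (intro conjI allI impI)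
  fix \<Lambda> :: "complex set"
  assume "finite \<Lambda> \<and> 0 \<notin> \<Lambda> \<and> cnj ` \<Lambda> = \<Lambda> \<and> 1 \<in> \<Lambda> \<and> (\<forall>z\<in>\<Lambda>. cmod z \<le> 1)"
  then show "\<exists>d T. 0 < d \<and> d \<le> 2 * max (card \<Lambda> - 1) 1 \<and>
      lin_map_on d T \<and> completely_positive d T \<and> trace_preserving d T \<and> spec_set d T - {0} = \<Lambda>"
    using realise_spectral_set by blast
next
  fix d T assume "0 < d \<and> lin_map_on d T \<and> positive_map d T \<and> trace_preserving d T"
  then show "cnj ` spec_set d T = spec_set d T" and "1 \<in> spec_set d T"
    and "\<forall>z\<in>spec_set d T. cmod z \<le> 1"
    using spec_set_cnj_closed one_in_spec_set spec_set_norm_le_one by blast+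
qed

end
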